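(* Let $\mathbb{F}$ be a field of characteristic $2$, $V$ a finite-dimensional $\mathbb{F}$-vector space and $b$ a non-degenerate symmetric bilinear form on $V$. Let $x$ be a non-zero vector of $V$ with $b(x,x)=0$, and let $u$ be a $b$-alternating endomorphism of $V$. The following are equivalent: (i) $u(x)=0$ and $u(\{x\}^\perp) \subset \mathbb{F}x$; (ii) there exists $y \in \{x\}^\perp$ such that $u = x\wedge_b y$. Moreover, if these conditions hold then $u$ is nilpotent.
   Context: An endomorphism $u$ of $V$ is $b$-alternating if the bilinear form $(z,w)\mapsto b(z,u(w))$ is alternating (vanishes on all pairs $(z,z)$). $\{x\}^\perp = \{z\in V : b(x,z)=0\}$. For $x,y\in V$, $x \wedge_b y$ is the endomorphism $z \mapsto b(y,z)\,x - b(x,z)\,y$. *)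

theory Defs
  imports Complex_Main
begin

definition symmetric_bilinear_form :: "('a::field \<Rightarrow> 'v::ab_group_add \<Rightarrow> 'v) \<Rightarrow> ('v \<Rightarrow> 'v \<Rightarrow> 'a) \<Rightarrow> bool" where
  "symmetric_bilinear_form scale b \<longleftrightarrow>
     (\<forall>z. Vector_Spaces.linear scale (*) (b z)) \<and> (\<forall>z w. b z w = b w z)"

definition nondegenerate_form :: "('v::ab_group_add \<Rightarrow> 'v \<Rightarrow> 'a::field) \<Rightarrow> bool" where
  "nondegenerate_form b \<longleftrightarrow> (\<forall>z. (\<forall>w. b z w = 0) \<longrightarrow> z = 0)"

definition b_alternating :: "('v \<Rightarrow> 'v \<Rightarrow> 'a::field) \<Rightarrow> ('v \<Rightarrow> 'v) \<Rightarrow> bool" where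
  "b_alternating b u \<longleftrightarrow> (\<forall>z. b z (u z) = 0)"

definition orth_single :: "('v \<Rightarrow> 'v \<Rightarrow> 'a::field) \<Rightarrow> 'v \<Rightarrow> 'v set" where
  "orth_single b x = {z. b x z = 0}"

definition wedge_b :: "('a::field \<Rightarrow> 'v::ab_group_add \<Rightarrow> 'v) \<Rightarrow> ('v \<Rightarrow> 'v \<Rightarrow> 'a) \<Rightarrow> 'v \<Rightarrow> 'v \<Rightarrow> 'v \<Rightarrow> 'v" where
  "wedge_b scale b x y = (\<lambda>z. scale (b y z) x - scale (b x z) y)"

end

theory Submission
  imports Defs
begin

text \<open>An alternating endomorphism u is skew: b z (u w) = - b w (u z). Pick w with b x w = 1
  and split z = z' + b x z w with z' orthogonal to x. If u kills x and maps the orthogonal of x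
  into the line through x, then u z' = f x, and pairing with w together with skewness gives
  f = - b (u w) z; hence u = wedge_b x y for y = - u w, which is orthogonal to x by skewness again.
  Conversely wedge_b x y kills x and maps the orthogonal of x into the line through x, and since
  it sends y into that line as well, its cube vanishes. Neither the characteristic nor the
  dimension plays any role once u is assumed alternating.\<close>

locale symmetric_form_space = vector_space scale
  for scale :: "'a::field \<Rightarrow> 'v::ab_group_add \<Rightarrow> 'v" +
  fixes b :: "'v \<Rightarrow> 'v \<Rightarrow> 'a"
  assumes symmetric_bilinear: "symmetric_bilinear_form scale b"
begin

lemma form_commute: "b z w = b w z"
  using symmetric_bilinear unfolding symmetric_bilinear_form_def by blast

lemma form_add_right: "b z (p + q) = b z p + b z q"
  and form_scale_right [simp]: "b z (scale c p) = c * b z p"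
  using symmetric_bilinear unfolding symmetric_bilinear_form_def Vector_Spaces.linear_iff by blast+

lemma form_diff_right [simp]: "b z (p - q) = b z p - b z q"
  by (metis form_add_right diff_add_cancel add_diff_cancel)

lemma form_minus_right [simp]: "b z (- p) = - b z p"
  by (metis form_diff_right diff_0 diff_self)

lemma form_zero_right [simp]: "b z 0 = 0"
  by (metis form_diff_right diff_self)

lemma wedge_b_apply_orth:
  assumes "z \<in> orth_single b x"
  shows "wedge_b scale b x y z = scale (b y z) x"
  using assms unfolding orth_single_def wedge_b_def by simp

lemma wedge_b_scale_self:
  assumes "b x x = 0" and "y \<in> orth_single b x"
  shows "wedge_b scale b x y (scale c x) = 0"
  using assms form_commute[of y x] unfolding orth_single_def wedge_b_def by simp

lemma wedge_b_cube_eq_0: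
  assumes iso: "b x x = 0" and y: "y \<in> orth_single b x"
  shows "wedge_b scale b x y ^^ 3 = (\<lambda>_. 0)"
proof
  fix z
  let ?w = "wedge_b scale b x y"
  have "?w (?w z) = scale (- (b x z * b y y)) x"
    using y form_commute[of y x] iso
    unfolding orth_single_def wedge_b_def by (simp add: scale_right_diff_distrib)
  then show "(?w ^^ 3) z = 0"
    using wedge_b_scale_self[OF iso y, of "- (b x z * b y y)"] by (simp add: numeral_3_eq_3)
qed

end

locale alternating_endomorphism = symmetric_form_space scale b
  for scale :: "'a::field \<Rightarrow> 'v::ab_group_add \<Rightarrow> 'v" and b +
  fixes u :: "'v \<Rightarrow> 'v"
  assumes linear: "Vector_Spaces.linear scale scale u"
    and alternating: "b_alternating b u"
begin

lemma map_add [simp]: "u (p + q) = u p + u q"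
  and map_scale [simp]: "u (scale c p) = scale c (u p)"
  using linear unfolding Vector_Spaces.linear_iff by blast+

lemma map_diff [simp]: "u (p - q) = u p - u q"
  by (metis map_add diff_add_cancel add_diff_cancel)

lemma form_self_eq_0: "b z (u z) = 0"
  using alternating unfolding b_alternating_def by blast

lemma form_skew: "b z (u w) = - b w (u z)"
proof -
  have "0 = b (z + w) (u (z + w))"
    by (rule form_self_eq_0[symmetric])
  also have "\<dots> = b z (u z) + b z (u w) + (b w (u z) + b w (u w))"
    by (simp add: form_add_right form_commute[of "z + w"] form_commute[of _ z] form_commute[of _ w])
  finally show ?thesis
    using form_self_eq_0 by (simp add: eq_neg_iff_add_eq_0)
qed

lemma eq_wedge_bI:
  assumes nondeg: "nondegenerate_form b" and x_nonzero: "x \<noteq> 0"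
    and ux: "u x = 0" and orth_to_line: "\<forall>z \<in> orth_single b x. \<exists>c. u z = scale c x"
  shows "\<exists>y \<in> orth_single b x. u = wedge_b scale b x y"
proof -
  obtain w0 where w0: "b x w0 \<noteq> 0"
    using nondeg x_nonzero unfolding nondegenerate_form_def by blast
  define w where "w = scale (inverse (b x w0)) w0"
  have bxw: "b x w = 1"
    unfolding w_def using w0 by simp
  have "- u w \<in> orth_single b x"
    using form_skew[of x w] ux unfolding orth_single_def by simp
  moreover have "u = wedge_b scale b x (- u w)"
  proof
    fix z
    define z' where "z' = z - scale (b x z) w"
    have "z' \<in> orth_single b x"
      unfolding z'_def orth_single_def using bxw by simp
    then obtain f where f: "u z' = scale f x"
      using orth_to_line by blast
    have "f = b w (u z')"
      using f bxw form_commute[of w x] by simp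
    also have "\<dots> = - b z' (u w)"
      by (rule form_skew)
    also have "\<dots> = - b (u w) z"
      unfolding z'_def using form_self_eq_0[of w] form_commute[of _ "u w"] by simp
    finally have "u z - scale (b x z) (u w) = scale (- b (u w) z) x"
      using f unfolding z'_def by simp
    then show "u z = wedge_b scale b x (- u w) z"
      unfolding wedge_b_def by (simp add: form_commute[of "- u w"] form_commute[of "u w" z] algebra_simps)
  qed
  ultimately show ?thesis
    by blast
qed

end

theorem corollary4p6:
  fixes scale :: "'a::field \<Rightarrow> 'v::ab_group_add \<Rightarrow> 'v"
    and basis :: "'v set"
    and b :: "'v \<Rightarrow> 'v \<Rightarrow> 'a"
    and u :: "'v \<Rightarrow> 'v"
    and x :: 'v
  assumes fdvs: "finite_dimensional_vector_space scale basis"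
    and char2: "(1::'a) + 1 = 0"
    and symb: "symmetric_bilinear_form scale b"
    and nondeg: "nondegenerate_form b"
    and xnz: "x \<noteq> 0"
    and xiso: "b x x = 0"
    and ulin: "Vector_Spaces.linear scale scale u"
    and ualt: "b_alternating b u"
  shows "((u x = 0 \<and> (\<forall>z \<in> orth_single b x. \<exists>c. u z = scale c x))
           \<longleftrightarrow> (\<exists>y \<in> orth_single b x. u = wedge_b scale b x y))
         \<and> ((u x = 0 \<and> (\<forall>z \<in> orth_single b x. \<exists>c. u z = scale c x))
           \<longrightarrow> (\<exists>k. u ^^ k = (\<lambda>_. 0)))"
proof -
  have "vector_space scale"
    using ulin by (simp add: Vector_Spaces.linear_iff)
  then interpret alternating_endomorphism scale b u
    using symb ulin ualt by (intro alternating_endomorphism.intro symmetric_form_space.intro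
        symmetric_form_space_axioms.intro alternating_endomorphism_axioms.intro)
  have wedge_properties: "u x = 0 \<and> (\<forall>z \<in> orth_single b x. \<exists>c. u z = scale c x)"
    if "y \<in> orth_single b x" and "u = wedge_b scale b x y" for y
    using that wedge_b_scale_self[OF xiso, of y 1] wedge_b_apply_orth by auto
  have wedge_nilpotent: "\<exists>k. u ^^ k = (\<lambda>_. 0)"
    if "y \<in> orth_single b x" and "u = wedge_b scale b x y" for y
    using that wedge_b_cube_eq_0[OF xiso] by blast
  show ?thesis
    using eq_wedge_bI[OF nondeg xnz] wedge_properties wedge_nilpotent by blast
qed

end
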